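(* Let $Q\subset\mathbb{R}^N$ be a convex polytope and $\phi:Q\to\mathbb{R}_+$ a distribution density function. For $P=(p_1,\dots,p_n)\in Q^n$ let $V_i(P)$ be the Voronoi cell of $p_i$ in $Q$ and $C_{V_i(P)}$ its centroid with respect to $\phi$. Let $T:Q^n\to Q^n$ be a continuous map with components $T_i$ satisfying: (a) for all $i\in\{1,\dots,n\}$, $\|T_i(P)-C_{V_i(P)}\|\le\|p_i-C_{V_i(P)}\|$; (b) if $P$ is not a centroidal Voronoi configuration, then there exists $j$ with $\|T_j(P)-C_{V_j(P)}\|<\|p_j-C_{V_j(P)}\|$. Let $P_0\in Q^n$. Then the sequence $\{T^m(P_0)\}_{m\ge1}$ converges to the set of centroidal Voronoi configurations. If this set is finite, then $\{T^m(P_0)\}_{m\ge1}$ converges to a centroidal Voronoi configuration.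
   Context: $\|\cdot\|$ is the Euclidean norm. The Voronoi cell of $p_i$ is $V_i(P)=\{q\in Q:\|q-p_i\|\le\|q-p_j\|\ \forall j\ne i\}$, and its centroid is $C_{V_i(P)}=\big(\int_{V_i(P)}\phi(q)\,dq\big)^{-1}\int_{V_i(P)}q\,\phi(q)\,dq$. A configuration $P$ is a centroidal Voronoi configuration if $p_i=C_{V_i(P)}$ for all $i$. $T^m$ denotes the $m$-fold composition of $T$. *)

theory Defs
  imports "HOL-Analysis.Analysis"
begin

definition config_space :: "'a set \<Rightarrow> ('a ^ 'n) set" where
  "config_space Q = {P. \<forall>i. P $ i \<in> Q}"

definition voronoi_cell :: "'a::real_normed_vector set \<Rightarrow> 'a ^ 'n \<Rightarrow> 'n \<Rightarrow> 'a set" where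
  "voronoi_cell Q P i = {q \<in> Q. \<forall>j. j \<noteq> i \<longrightarrow> norm (q - P $ i) \<le> norm (q - P $ j)}"

definition centroid :: "('a::euclidean_space \<Rightarrow> real) \<Rightarrow> 'a set \<Rightarrow> 'a" where
  "centroid \<phi> V = inverse (integral V \<phi>) *\<^sub>R integral V (\<lambda>q. \<phi> q *\<^sub>R q)"

definition centroidal_voronoi :: "'a::euclidean_space set \<Rightarrow> ('a \<Rightarrow> real) \<Rightarrow> 'a ^ 'n \<Rightarrow> bool" where
  "centroidal_voronoi Q \<phi> P \<longleftrightarrow> (\<forall>i. P $ i = centroid \<phi> (voronoi_cell Q P i))"

end

theory Submission
  imports Defs
begin

(* The quantization energy H(P) = \<integral>_Q min_i |q - p_i|^2 \<phi>(q) dq is a continuous strict Lyapunov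
   function for T. Measuring the distances to the sites of X over the cells V_i(P) instead of
   over the cells of X can only increase the energy, so H(X) - H(P) is at most the sum of the
   terms \<integral>_{V_i(P)} (|q - x_i|^2 - |q - p_i|^2) \<phi>(q) dq (divided by the multiplicity of p_i when
   sites coincide), and by the parallel axis theorem each term equals
   mass(V_i(P)) (|x_i - C_i|^2 - |p_i - C_i|^2). So (a) makes H non-increasing along T and (b)
   makes the decrease strict off the centroidal Voronoi configurations, which are exactly the
   fixed points of T. On the compact space Q^n a LaSalle-type argument shows that every limit
   point of the orbit is a fixed point and that consecutive iterates come arbitrarily close;
   with finitely many fixed points this forces convergence. *)

section \<open>Strict Lyapunov functions of discrete dynamical systems\<close>

lemma finite_uniformly_separated:
  fixes S :: "'a::metric_space set"
  assumes "finite S"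
  obtains d where "d > 0" "\<And>a b. a \<in> S \<Longrightarrow> b \<in> S \<Longrightarrow> a \<noteq> b \<Longrightarrow> d \<le> dist a b"
proof
  define D where "D = (\<lambda>(a, b). dist a b) ` {(a, b) \<in> S \<times> S. a \<noteq> b}"
  have "finite D" unfolding D_def using assms by (auto intro: finite_subset[of _ "S \<times> S"])
  then show "Min (insert 1 D) > 0" unfolding D_def by auto
  show "Min (insert 1 D) \<le> dist a b" if "a \<in> S" "b \<in> S" "a \<noteq> b" for a b
    using \<open>finite D\<close> that unfolding D_def by (intro Min_le) auto
qed

lemma infdist_attained_finite:
  assumes "finite A" "A \<noteq> {}"
  shows "\<exists>a\<in>A. infdist x A = dist x a"
proof -
  have "infdist x A = Min (dist x ` A)"
    using assms by (simp add: infdist_notempty cInf_eq_Min)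
  moreover have "Min (dist x ` A) \<in> dist x ` A"
    using assms by (intro Min_in) auto
  ultimately show ?thesis by auto
qed

lemma tendsto_element_of_finite_set:
  fixes x :: "nat \<Rightarrow> 'a::metric_space"
  assumes S: "finite S" "S \<noteq> {}"
    and near: "(\<lambda>n. infdist (x n) S) \<longlonglongrightarrow> 0"
    and steps: "(\<lambda>n. dist (x (Suc n)) (x n)) \<longlonglongrightarrow> 0"
  shows "\<exists>c\<in>S. x \<longlonglongrightarrow> c"
proof -
  obtain d where d: "d > 0" "\<And>a b. a \<in> S \<Longrightarrow> b \<in> S \<Longrightarrow> a \<noteq> b \<Longrightarrow> d \<le> dist a b"
    using finite_uniformly_separated[OF S(1)] by blast
  have nearest: "\<exists>s\<in>S. infdist y S = dist y s" for y
    using infdist_attained_finite[OF S] .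
  have "d / 3 > 0" using d(1) by simp
  then have "\<forall>\<^sub>F n in sequentially. infdist (x n) S < d / 3 \<and> dist (x (Suc n)) (x n) < d / 3"
    using eventually_conj[OF order_tendstoD(2)[OF near] order_tendstoD(2)[OF steps]] by blast
  then obtain N where N: "\<And>n. n \<ge> N \<Longrightarrow> infdist (x n) S < d / 3 \<and> dist (x (Suc n)) (x n) < d / 3"
    unfolding eventually_sequentially by blast
  obtain c where c: "c \<in> S" "infdist (x N) S = dist (x N) c" using nearest by blast
  \<comment> \<open>Steps shorter than d / 3 cannot carry the sequence from c to another point of S.\<close>
  have "infdist (x n) S = dist (x n) c" if "n \<ge> N" for n
    using that
  proof (induction n rule: dec_induct)
    case (step n)
    obtain s where s: "s \<in> S" "infdist (x (Suc n)) S = dist (x (Suc n)) s" using nearest by blast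
    have "dist c s \<le> dist c (x (Suc n)) + dist (x (Suc n)) s" by (rule dist_triangle)
    also have "dist c (x (Suc n)) \<le> dist (x n) c + dist (x (Suc n)) (x n)"
      using dist_triangle[of c "x (Suc n)" "x n"] by (simp add: dist_commute)
    also have "dist (x n) c + dist (x (Suc n)) (x n) + dist (x (Suc n)) s < d"
      using N[of n] N[of "Suc n"] step.hyps(1) step.IH s(2) by simp
    finally have "s = c" using d(2)[OF c(1) s(1)] by force
    then show ?case using s by simp
  qed (use c in simp)
  then have "\<forall>\<^sub>F n in sequentially. infdist (x n) S = dist (x n) c"
    unfolding eventually_sequentially by blast
  then have "(\<lambda>n. dist (x n) c) \<longlonglongrightarrow> 0" using Lim_transform_eventually[OF near] by (simp add: eventually_mono)
  then show ?thesis using c(1) tendsto_dist_iff by blast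
qed

lemma tendsto_zero_at_limit_points:
  fixes x :: "nat \<Rightarrow> 'a::metric_space" and f :: "'a \<Rightarrow> real"
  assumes K: "compact K" "\<And>n. x n \<in> K" and f: "continuous_on K f"
    and zero: "\<And>r y. strict_mono r \<Longrightarrow> (x \<circ> r) \<longlonglongrightarrow> y \<Longrightarrow> f y = 0"
  shows "(\<lambda>n. f (x n)) \<longlonglongrightarrow> 0"
proof (rule ccontr)
  assume "\<not> ?thesis"
  then obtain e where e: "e > 0" "\<And>N. \<exists>n\<ge>N. e \<le> \<bar>f (x n)\<bar>"
    unfolding LIMSEQ_iff by (auto simp: not_less)
  then have "infinite {n. e \<le> \<bar>f (x n)\<bar>}"
    unfolding infinite_nat_iff_unbounded_le by simp
  from infinite_enumerate[OF this] obtain r :: "nat \<Rightarrow> nat"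
    where r: "strict_mono r" "\<And>n. e \<le> \<bar>f (x (r n))\<bar>" by auto
  have "\<forall>n. (x \<circ> r) n \<in> K" using K(2) by simp
  then obtain y r' where y: "y \<in> K" "strict_mono r'" "((x \<circ> r) \<circ> r') \<longlonglongrightarrow> y"
    by (rule seq_compactE[OF compact_imp_seq_compact[OF K(1)]])
  then have "(\<lambda>n. f ((x \<circ> r \<circ> r') n)) \<longlonglongrightarrow> f y"
    using K(2) by (intro continuous_on_tendsto_compose[OF f]) (auto simp: o_def)
  moreover have "f y = 0"
    using zero[OF strict_mono_o[OF r(1) y(2)]] y(3) by (simp add: o_assoc)
  ultimately have "(\<lambda>n. \<bar>f (x (r (r' n)))\<bar>) \<longlonglongrightarrow> 0"
    using tendsto_rabs by fastforce
  moreover have "\<forall>n. e \<le> \<bar>f (x (r (r' n)))\<bar>" using r(2) by blast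
  ultimately have "e \<le> 0" by (intro LIMSEQ_le_const) auto
  with e(1) show False by simp
qed

locale strict_lyapunov =
  fixes K :: "'a::metric_space set" and T :: "'a \<Rightarrow> 'a" and E :: "'a \<Rightarrow> real"
  assumes compact_K: "compact K" and maps_to: "T ` K \<subseteq> K"
    and continuous_T: "continuous_on K T" and continuous_E: "continuous_on K E"
    and strictly_decreasing: "\<And>x. x \<in> K \<Longrightarrow> T x \<noteq> x \<Longrightarrow> E (T x) < E x"
begin

lemma decreasing: "x \<in> K \<Longrightarrow> E (T x) \<le> E x"
  using strictly_decreasing by (cases "T x = x") (auto intro: less_imp_le)

lemma orbit_in: "x0 \<in> K \<Longrightarrow> (T ^^ n) x0 \<in> K"
  by (induction n) (use maps_to in auto)

lemma orbit_limit_point_fixed: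
  assumes x0: "x0 \<in> K" and r: "strict_mono r" and lim: "((\<lambda>n. (T ^^ n) x0) \<circ> r) \<longlonglongrightarrow> y"
  shows "y \<in> K \<and> T y = y"
proof -
  define x where "x n = (T ^^ n) x0" for n
  have x: "x n \<in> K" for n unfolding x_def using orbit_in[OF x0] .
  have y: "y \<in> K"
    using closed_sequentially[OF compact_imp_closed[OF compact_K] _ lim] x unfolding x_def by auto
  obtain B where "\<And>z. z \<in> K \<Longrightarrow> B \<le> E z"
    using compact_attains_inf[OF compact_continuous_image[OF continuous_E compact_K]] x by blast
  moreover have "decseq (\<lambda>n. E (x n))"
    unfolding decseq_Suc_iff x_def using decreasing orbit_in[OF x0] by simp
  ultimately obtain L where L: "(\<lambda>n. E (x n)) \<longlonglongrightarrow> L"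
    using decseq_convergent x by metis
  have "(\<lambda>n. E (x (r n))) \<longlonglongrightarrow> E y"
    using lim x y unfolding x_def by (intro continuous_on_tendsto_compose[OF continuous_E]) (auto simp: o_def)
  moreover have "(\<lambda>n. E (x (r n))) \<longlonglongrightarrow> L"
    using LIMSEQ_subseq_LIMSEQ[OF L r] by (simp add: o_def)
  ultimately have "E y = L" by (rule LIMSEQ_unique)
  have "(\<lambda>n. T (x (r n))) \<longlonglongrightarrow> T y"
    using lim x y unfolding x_def by (intro continuous_on_tendsto_compose[OF continuous_T]) (auto simp: o_def)
  then have "(\<lambda>n. E (T (x (r n)))) \<longlonglongrightarrow> E (T y)"
    using x y maps_to by (intro continuous_on_tendsto_compose[OF continuous_E]) (auto simp: image_subset_iff)
  moreover have "(\<lambda>n. E (T (x (r n)))) \<longlonglongrightarrow> L"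
    using LIMSEQ_subseq_LIMSEQ[OF LIMSEQ_Suc[OF L] r] by (simp add: o_def x_def)
  ultimately have "E (T y) = E y"
    using \<open>E y = L\<close> LIMSEQ_unique by blast
  then have "T y = y" using strictly_decreasing[OF y] by (metis less_irrefl)
  with y show ?thesis by blast
qed

lemma infdist_orbit_fixed_points_tendsto_0:
  assumes "x0 \<in> K"
  shows "(\<lambda>n. infdist ((T ^^ n) x0) {x \<in> K. T x = x}) \<longlonglongrightarrow> 0"
  using compact_K orbit_in[OF assms] continuous_on_infdist[OF continuous_on_id]
proof (rule tendsto_zero_at_limit_points)
  fix r y assume "strict_mono r" "((\<lambda>n. (T ^^ n) x0) \<circ> r) \<longlonglongrightarrow> y"
  then have "y \<in> {x \<in> K. T x = x}" using orbit_limit_point_fixed[OF assms] by blast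
  then show "infdist y {x \<in> K. T x = x} = 0" by (rule infdist_zero)
qed

lemma orbit_steps_tendsto_0:
  assumes "x0 \<in> K"
  shows "(\<lambda>n. dist ((T ^^ Suc n) x0) ((T ^^ n) x0)) \<longlonglongrightarrow> 0"
proof -
  have "(\<lambda>n. dist (T ((T ^^ n) x0)) ((T ^^ n) x0)) \<longlonglongrightarrow> 0"
    using compact_K orbit_in[OF assms]
  proof (rule tendsto_zero_at_limit_points)
    show "continuous_on K (\<lambda>z. dist (T z) z)"
      by (intro continuous_intros continuous_T)
  qed (use orbit_limit_point_fixed[OF assms] in simp)
  then show ?thesis by simp
qed

lemma orbit_tendsto_fixed_point:
  assumes "x0 \<in> K" and "finite {x \<in> K. T x = x}"
  shows "\<exists>c\<in>{x \<in> K. T x = x}. (\<lambda>n. (T ^^ n) x0) \<longlonglongrightarrow> c"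
proof (rule tendsto_element_of_finite_set[OF assms(2)])
  have "\<forall>n. (T ^^ n) x0 \<in> K" using orbit_in[OF assms(1)] by blast
  then obtain y r where "strict_mono r" "((\<lambda>n. (T ^^ n) x0) \<circ> r) \<longlonglongrightarrow> y"
    by (rule seq_compactE[OF compact_imp_seq_compact[OF compact_K]])
  then show "{x \<in> K. T x = x} \<noteq> {}" using orbit_limit_point_fixed[OF assms(1)] by blast
  show "(\<lambda>n. infdist ((T ^^ n) x0) {x \<in> K. T x = x}) \<longlonglongrightarrow> 0"
    by (rule infdist_orbit_fixed_points_tendsto_0[OF assms(1)])
  show "(\<lambda>n. dist ((T ^^ Suc n) x0) ((T ^^ n) x0)) \<longlonglongrightarrow> 0"
    by (rule orbit_steps_tendsto_0[OF assms(1)])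
qed

end

section \<open>Configurations and Voronoi cells\<close>

lemma compact_config_space:
  fixes Q :: "'a::euclidean_space set"
  assumes "compact Q"
  shows "compact (config_space Q :: ('a ^ 'n) set)"
proof -
  obtain B where B: "\<And>q. q \<in> Q \<Longrightarrow> norm q \<le> B"
    using assms compact_imp_bounded bounded_iff by metis
  have "norm P \<le> real CARD('n) * B" if "P \<in> config_space Q" for P :: "'a ^ 'n"
  proof -
    have "norm P \<le> (\<Sum>i\<in>UNIV. norm (P $ i))"
      unfolding norm_vec_def by (rule L2_set_le_sum) simp
    also have "\<dots> \<le> (\<Sum>i\<in>(UNIV :: 'n set). B)"
      using that B by (intro sum_mono) (auto simp: config_space_def)
    finally show ?thesis by simp
  qed
  then have "bounded (config_space Q :: ('a ^ 'n) set)"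
    unfolding bounded_iff by blast
  moreover have "closed (config_space Q :: ('a ^ 'n) set)"
  proof -
    have "config_space Q = (\<Inter>i. (\<lambda>P::'a ^ 'n. P $ i) -` Q)"
      unfolding config_space_def by auto
    then show ?thesis
      using compact_imp_closed[OF assms]
      by (auto intro!: closed_INT continuous_closed_vimage continuous_intros)
  qed
  ultimately show ?thesis by (simp add: compact_eq_bounded_closed)
qed

definition sites :: "'a ^ 'n \<Rightarrow> 'a set" where
  "sites P = range (\<lambda>i. P $ i)"

lemma infdist_sites_le: "infdist q (sites P) \<le> norm (q - P $ i)"
  unfolding sites_def by (metis dist_norm infdist_le rangeI)

lemma infdist_sites_attained: "\<exists>i. infdist q (sites P) = norm (q - P $ i)"
  using infdist_attained_finite[of "sites P" q] unfolding sites_def by (auto simp: dist_norm)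

lemma infdist_sites_lipschitz:
  fixes P P' :: "'a::real_normed_vector ^ 'n"
  shows "\<bar>infdist q (sites P) - infdist q (sites P')\<bar> \<le> dist P P'"
proof -
  have "infdist q (sites P) \<le> infdist q (sites P') + dist P P'" for P P' :: "'a ^ 'n"
  proof -
    obtain i where i: "infdist q (sites P') = norm (q - P' $ i)"
      using infdist_sites_attained by blast
    have "infdist q (sites P) \<le> norm (q - P' $ i) + norm (P' $ i - P $ i)"
      using infdist_sites_le[of q P i] norm_triangle_ineq[of "q - P' $ i" "P' $ i - P $ i"] by simp
    also have "norm (P' $ i - P $ i) \<le> dist P P'"
      using Finite_Cartesian_Product.norm_nth_le[of "P - P'" i] by (simp add: dist_norm norm_minus_commute)
    finally show ?thesis using i by simp
  qed
  from this[of P P'] this[of P' P] show ?thesis by (simp add: dist_commute)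
qed

lemma infdist_sites_sq_diff_bound:
  fixes P P' :: "'a::real_normed_vector ^ 'n"
  assumes "infdist q (sites P) \<le> D" "infdist q (sites P') \<le> D"
  shows "\<bar>infdist q (sites P) ^ 2 - infdist q (sites P') ^ 2\<bar> \<le> 2 * D * dist P P'"
proof -
  have "infdist q (sites P) ^ 2 - infdist q (sites P') ^ 2
      = (infdist q (sites P) - infdist q (sites P')) * (infdist q (sites P) + infdist q (sites P'))"
    by (simp add: power2_eq_square algebra_simps)
  then have "\<bar>infdist q (sites P) ^ 2 - infdist q (sites P') ^ 2\<bar>
      = \<bar>infdist q (sites P) - infdist q (sites P')\<bar> * (infdist q (sites P) + infdist q (sites P'))"
    by (simp add: abs_mult infdist_nonneg)
  also have "\<dots> \<le> dist P P' * (2 * D)"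
    using infdist_sites_lipschitz assms
    by (intro mult_mono) (auto intro: add_nonneg_nonneg infdist_nonneg)
  finally show ?thesis by (simp add: ac_simps)
qed

lemma voronoi_cell_iff:
  "q \<in> voronoi_cell Q P i \<longleftrightarrow> q \<in> Q \<and> norm (q - P $ i) = infdist q (sites P)"
proof -
  obtain j where j: "infdist q (sites P) = norm (q - P $ j)"
    using infdist_sites_attained by blast
  show ?thesis
    unfolding voronoi_cell_def using infdist_sites_le[of q P] j
    by (smt (verit) mem_Collect_eq)
qed

lemma voronoi_cell_subset: "voronoi_cell Q P i \<subseteq> Q"
  unfolding voronoi_cell_def by auto

lemma closed_voronoi_cell:
  assumes "closed Q"
  shows "closed (voronoi_cell Q P i)"
proof -
  have "voronoi_cell Q P i = Q \<inter> {q. norm (q - P $ i) = infdist q (sites P)}"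
    using voronoi_cell_iff by blast
  then show ?thesis
    using assms by (auto intro!: closed_Int closed_Collect_eq continuous_intros)
qed

lemma ball_inter_subset_voronoi_cell: "\<exists>r>0. ball (P $ i) r \<inter> Q \<subseteq> voronoi_cell Q P i"
proof -
  obtain \<delta> where \<delta>: "\<delta> > 0" "\<And>x. x \<in> sites P \<Longrightarrow> x \<noteq> P $ i \<Longrightarrow> \<delta> \<le> dist (P $ i) x"
    using finite_set_avoid[of "sites P" "P $ i"] unfolding sites_def by auto
  have "q \<in> voronoi_cell Q P i" if q: "q \<in> ball (P $ i) (\<delta> / 2) \<inter> Q" for q
  proof -
    have "norm (q - P $ i) \<le> norm (q - P $ j)" for j
    proof (cases "P $ j = P $ i")
      case False
      then have "\<delta> \<le> dist (P $ i) (P $ j)" using \<delta>(2) unfolding sites_def by blast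
      also have "\<dots> \<le> dist (P $ i) q + dist q (P $ j)" by (rule dist_triangle)
      finally show ?thesis using q by (simp add: dist_norm norm_minus_commute)
    qed simp
    then show ?thesis unfolding voronoi_cell_def using q by blast
  qed
  then show ?thesis using \<delta>(1) by (intro exI[of _ "\<delta> / 2"]) auto
qed

lemma negligible_bisector:
  fixes a b :: "'a::euclidean_space"
  assumes "a \<noteq> b"
  shows "negligible {q. norm (q - a) = norm (q - b)}"
proof -
  have "norm (q - a) = norm (q - b) \<longleftrightarrow> (2 *\<^sub>R (b - a)) \<bullet> q = norm b ^ 2 - norm a ^ 2" for q
  proof -
    have "norm (q - a) = norm (q - b) \<longleftrightarrow> norm (q - a) ^ 2 = norm (q - b) ^ 2"
      by (simp add: power2_eq_iff_nonneg)
    then show ?thesis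
      by (simp add: power2_norm_eq_inner inner_diff_left inner_diff_right inner_commute algebra_simps)
  qed
  then have "{q. norm (q - a) = norm (q - b)} = {q. (2 *\<^sub>R (b - a)) \<bullet> q = norm b ^ 2 - norm a ^ 2}"
    by blast
  then show ?thesis
    by (metis assms negligible_hyperplane right_minus_eq scaleR_eq_0_iff zero_neq_numeral)
qed

lemma negligible_voronoi_ties:
  fixes P :: "'a::euclidean_space ^ 'n"
  shows "negligible {q. \<exists>i l. P $ i \<noteq> P $ l \<and> norm (q - P $ i) = norm (q - P $ l)}"
proof -
  have "{q. \<exists>i l. P $ i \<noteq> P $ l \<and> norm (q - P $ i) = norm (q - P $ l)}
      = (\<Union>(i, l) \<in> {(i, l). P $ i \<noteq> P $ l}. {q. norm (q - P $ i) = norm (q - P $ l)})"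
    by auto
  then show ?thesis
    by (auto intro!: negligible_Union negligible_bisector)
qed

lemma voronoi_cells_containing:
  assumes "q \<in> voronoi_cell Q P i"
    and "\<And>l. P $ l \<noteq> P $ i \<Longrightarrow> norm (q - P $ l) \<noteq> norm (q - P $ i)"
  shows "{l. q \<in> voronoi_cell Q P l} = {l. P $ l = P $ i}"
  using assms unfolding voronoi_cell_iff by auto

lemma infdist_sites_sq_diff_le_cell_average:
  assumes "q \<in> Q"
  shows "infdist q (sites X) ^ 2 - infdist q (sites P) ^ 2
    \<le> (\<Sum>i\<in>UNIV. if q \<in> voronoi_cell Q P i
          then (norm (q - X $ i) ^ 2 - norm (q - P $ i) ^ 2) / card {l. q \<in> voronoi_cell Q P l}
          else 0)"
proof -
  define I where "I = {i. q \<in> voronoi_cell Q P i}"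
  obtain i0 where "infdist q (sites P) = norm (q - P $ i0)"
    using infdist_sites_attained by blast
  then have "I \<noteq> {}" unfolding I_def voronoi_cell_iff using assms by auto
  have "infdist q (sites X) ^ 2 - infdist q (sites P) ^ 2 \<le> norm (q - X $ i) ^ 2 - norm (q - P $ i) ^ 2"
    if "i \<in> I" for i
  proof -
    have "infdist q (sites P) = norm (q - P $ i)"
      using that unfolding I_def voronoi_cell_iff by simp
    moreover have "infdist q (sites X) ^ 2 \<le> norm (q - X $ i) ^ 2"
      using infdist_sites_le infdist_nonneg by (intro power_mono)
    ultimately show ?thesis by simp
  qed
  then have "card I * (infdist q (sites X) ^ 2 - infdist q (sites P) ^ 2)
      \<le> (\<Sum>i\<in>I. norm (q - X $ i) ^ 2 - norm (q - P $ i) ^ 2)"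
    using sum_mono[of I "\<lambda>_. infdist q (sites X) ^ 2 - infdist q (sites P) ^ 2"] by simp
  then have "infdist q (sites X) ^ 2 - infdist q (sites P) ^ 2
      \<le> (\<Sum>i\<in>I. norm (q - X $ i) ^ 2 - norm (q - P $ i) ^ 2) / card I"
    using \<open>I \<noteq> {}\<close> by (simp add: card_gt_0_iff pos_le_divide_eq mult.commute)
  also have "\<dots> = (\<Sum>i\<in>UNIV. if q \<in> voronoi_cell Q P i
          then (norm (q - X $ i) ^ 2 - norm (q - P $ i) ^ 2) / card {l. q \<in> voronoi_cell Q P l}
          else 0)"
    unfolding I_def by (simp add: sum.If_cases sum_divide_distrib)
  finally show ?thesis .
qed

section \<open>Weighted integrals and centroids\<close>

lemma absolutely_integrable_scaleR_continuous:
  fixes f :: "'a::euclidean_space \<Rightarrow> real" and g :: "'a \<Rightarrow> 'b::euclidean_space"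
  assumes f: "f absolutely_integrable_on S" and S: "compact S" and g: "continuous_on S g"
  shows "(\<lambda>x. f x *\<^sub>R g x) absolutely_integrable_on S"
proof -
  have S_lebesgue: "S \<in> sets lebesgue" using S by (simp add: borel_compact)
  have "bilinear (\<lambda>(y::'b) (c::real). c *\<^sub>R y)"
    using bounded_bilinear.flip[OF bounded_bilinear_scaleR] by (simp add: bilinear_conv_bounded_bilinear)
  then show ?thesis
  proof (rule absolutely_integrable_bounded_measurable_product[OF _ _ S_lebesgue _ f])
    show "g \<in> borel_measurable (lebesgue_on S)"
      by (rule continuous_imp_measurable_on_sets_lebesgue[OF g S_lebesgue])
    show "bounded (g ` S)"
      by (rule compact_imp_bounded[OF compact_continuous_image[OF g S]])
  qed
qed

lemma integral_pos_not_negligible: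
  fixes f :: "'a::euclidean_space \<Rightarrow> real"
  assumes f: "f integrable_on S" and pos: "\<And>x. x \<in> S \<Longrightarrow> 0 < f x"
    and S: "S \<in> sets lebesgue" "\<not> negligible S"
  shows "0 < integral S f"
proof -
  have int: "integrable (lebesgue_on S) f"
    using nonnegative_absolutely_integrable_1[OF f] pos
    by (intro absolutely_integrable_imp_integrable S(1)) (auto intro: less_imp_le)
  have "integral S f \<noteq> 0"
  proof
    assume "integral S f = 0"
    then have "integral\<^sup>L (lebesgue_on S) f = 0"
      using lebesgue_integral_eq_integral[OF int S(1)] by simp
    moreover have "AE x in lebesgue_on S. 0 \<le> f x"
      using pos S(1) by (intro AE_I2) (auto simp: space_restrict_space less_imp_le)
    ultimately have "AE x in lebesgue_on S. f x = 0"
      using integral_nonneg_eq_0_iff_AE[OF int] by simp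
    moreover have "AE x in lebesgue_on S. f x \<noteq> 0"
      using pos S(1) by (intro AE_I2) (force simp: space_restrict_space)
    ultimately have "AE x in lebesgue_on S. False"
      by eventually_elim simp
    then have "emeasure (lebesgue_on S) S = 0"
      using ae_filter_eq_bot_iff[of "lebesgue_on S"] S(1)
      by (simp add: trivial_limit_def space_restrict_space)
    then have "S \<in> null_sets lebesgue"
      using S(1) by (simp add: emeasure_restrict_space null_sets_def)
    then show False using S(2) negligible_iff_null_sets by blast
  qed
  moreover have "0 \<le> integral S f"
    using integral_nonneg[OF f] pos less_imp_le by metis
  ultimately show ?thesis by simp
qed

lemma integral_sqdist_diff_centroid:
  fixes \<phi> :: "'a::euclidean_space \<Rightarrow> real"
  assumes \<phi>: "\<phi> integrable_on V" and moment: "(\<lambda>q. \<phi> q *\<^sub>R q) integrable_on V"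
    and mass: "integral V \<phi> \<noteq> 0"
  shows "integral V (\<lambda>q. \<phi> q * (norm (q - x) ^ 2 - norm (q - p) ^ 2))
       = integral V \<phi> * (norm (x - centroid \<phi> V) ^ 2 - norm (p - centroid \<phi> V) ^ 2)"
proof -
  define c where "c = centroid \<phi> V"
  have first_moment: "integral V (\<lambda>q. \<phi> q *\<^sub>R q) = integral V \<phi> *\<^sub>R c"
    using mass unfolding c_def centroid_def by simp
  have expand: "\<phi> q * (norm (q - x) ^ 2 - norm (q - p) ^ 2)
      = (norm x ^ 2 - norm p ^ 2) * \<phi> q - 2 * ((\<phi> q *\<^sub>R q) \<bullet> (x - p))" for q
    by (simp add: power2_norm_eq_inner inner_diff_left inner_diff_right inner_commute algebra_simps)
  have moment_inner: "(\<lambda>q. (\<phi> q *\<^sub>R q) \<bullet> (x - p)) integrable_on V"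
    and integral_moment_inner: "integral V (\<lambda>q. (\<phi> q *\<^sub>R q) \<bullet> (x - p)) = (integral V \<phi> *\<^sub>R c) \<bullet> (x - p)"
    using integrable_linear[OF moment bounded_linear_inner_left] integral_linear[OF moment bounded_linear_inner_left]
    by (simp_all add: o_def first_moment)
  have "integral V (\<lambda>q. \<phi> q * (norm (q - x) ^ 2 - norm (q - p) ^ 2))
      = (norm x ^ 2 - norm p ^ 2) * integral V \<phi> - 2 * ((integral V \<phi> *\<^sub>R c) \<bullet> (x - p))"
    unfolding expand
    using integral_diff[OF integrable_on_mult_right[OF \<phi>] integrable_on_mult_right[OF moment_inner]]
    by (simp only: integral_mult_right integral_moment_inner)
  also have "\<dots> = integral V \<phi> * (norm (x - c) ^ 2 - norm (p - c) ^ 2)"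
    by (simp add: power2_norm_eq_inner inner_diff_left inner_diff_right inner_commute algebra_simps)
  finally show ?thesis unfolding c_def .
qed

section \<open>The quantization energy\<close>

locale voronoi_density =
  fixes Q :: "'a::euclidean_space set" and \<phi> :: "'a \<Rightarrow> real"
  assumes compact_Q: "compact Q" and convex_Q: "convex Q" and interior_Q: "interior Q \<noteq> {}"
    and integrable_\<phi>: "\<phi> integrable_on Q" and \<phi>_pos: "\<And>q. q \<in> Q \<Longrightarrow> 0 < \<phi> q"
begin

lemma \<phi>_nonneg: "q \<in> Q \<Longrightarrow> 0 \<le> \<phi> q"
  using \<phi>_pos by (simp add: less_imp_le)

lemma absolutely_integrable_density:
  assumes "S \<in> sets lebesgue" "S \<subseteq> Q"
  shows "\<phi> absolutely_integrable_on S"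
proof -
  have "\<phi> absolutely_integrable_on Q"
    using integrable_\<phi> \<phi>_nonneg by (rule nonnegative_absolutely_integrable_1)
  then show ?thesis using set_integrable_subset assms by blast
qed

lemma integrable_weighted:
  fixes g :: "'a \<Rightarrow> 'b::euclidean_space"
  assumes V: "closed V" "V \<subseteq> Q" and g: "continuous_on V g"
  shows "(\<lambda>q. \<phi> q *\<^sub>R g q) integrable_on V"
proof -
  have "compact V" using closed_Int_compact[OF V(1) compact_Q] V(2) by (simp add: inf.absorb1)
  then have "(\<lambda>q. \<phi> q *\<^sub>R g q) absolutely_integrable_on V"
    using absolutely_integrable_density[OF _ V(2)] V(1) g
    by (intro absolutely_integrable_scaleR_continuous) (auto simp: borel_closed)
  then show ?thesis by (simp add: absolutely_integrable_on_def)
qed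

lemma integrable_weighted_real:
  fixes g :: "'a \<Rightarrow> real"
  assumes "closed V" "V \<subseteq> Q" "continuous_on V g"
  shows "(\<lambda>q. \<phi> q * g q) integrable_on V"
  using integrable_weighted[OF assms] by simp

lemma closed_voronoi_cell': "closed (voronoi_cell Q P i)"
  using closed_voronoi_cell[OF compact_imp_closed[OF compact_Q]] .

lemma integrable_density_voronoi_cell: "\<phi> integrable_on voronoi_cell Q P i"
  using integrable_weighted_real[OF closed_voronoi_cell' voronoi_cell_subset, where g = "\<lambda>_. 1"] by simp

lemma mass_voronoi_cell_pos:
  assumes "P \<in> config_space Q"
  shows "0 < integral (voronoi_cell Q P i) \<phi>"
proof -
  obtain r where r: "r > 0" "ball (P $ i) r \<inter> Q \<subseteq> voronoi_cell Q P i"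
    using ball_inter_subset_voronoi_cell by blast
  have "P $ i \<in> closure (interior Q)"
    using assms closure_subset convex_closure_interior[OF convex_Q interior_Q]
    by (auto simp: config_space_def)
  then obtain z where z: "z \<in> interior Q" "dist z (P $ i) < r"
    using r(1) closure_approachable by blast
  define U where "U = ball (P $ i) r \<inter> interior Q"
  have U: "open U" "U \<noteq> {}" "U \<subseteq> Q" "U \<subseteq> voronoi_cell Q P i"
    using z r(2) interior_subset unfolding U_def by (auto simp: dist_commute)
  have integrable_U: "\<phi> integrable_on U"
    using absolutely_integrable_density[OF _ U(3)] U(1)
    by (simp add: absolutely_integrable_on_def borel_open)
  have "0 < integral U \<phi>"
    using U(1,2,3) \<phi>_pos open_not_negligible
    by (intro integral_pos_not_negligible integrable_U) (auto simp: borel_open)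
  also have "\<dots> \<le> integral (voronoi_cell Q P i) \<phi>"
    using U(4) integrable_U integrable_density_voronoi_cell \<phi>_nonneg voronoi_cell_subset[of Q P i]
    by (intro integral_subset_le) auto
  finally show ?thesis .
qed

definition energy :: "'a ^ 'n \<Rightarrow> real" where
  "energy P = integral Q (\<lambda>q. \<phi> q * (infdist q (sites P)) ^ 2)"

lemma integrable_energy_density: "(\<lambda>q. \<phi> q * (infdist q (sites P)) ^ 2) integrable_on Q"
proof (rule integrable_weighted_real[OF compact_imp_closed[OF compact_Q] subset_refl])
  show "continuous_on Q (\<lambda>q. (infdist q (sites P)) ^ 2)"
    by (intro continuous_intros)
qed

lemma energy_diff_le_cells:
  fixes P X :: "'a ^ 'n"
  shows "energy X - energy P \<le> (\<Sum>i\<in>UNIV.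
    integral (voronoi_cell Q P i) (\<lambda>q. \<phi> q * (norm (q - X $ i) ^ 2 - norm (q - P $ i) ^ 2))
      / card {l. P $ l = P $ i})"
proof -
  define V where "V i = voronoi_cell Q P i" for i
  define g where "g i q = \<phi> q * (norm (q - X $ i) ^ 2 - norm (q - P $ i) ^ 2)" for i q
  define m where "m i = real (card {l. P $ l = P $ i})" for i
  \<comment> \<open>Each point shares its weight equally among the cells containing it. Off the null set
    of ties these are the cells of the sites equal to P $ i, whence the factor 1 / m i.\<close>
  define h where "h i q = \<phi> q * (if q \<in> V i
      then (norm (q - X $ i) ^ 2 - norm (q - P $ i) ^ 2) / card {l. q \<in> V l} else 0)" for i q
  have h_integral: "(h i has_integral integral (V i) (g i) / m i) Q" for i
  proof -
    have "((\<lambda>q. g i q / m i) has_integral integral (V i) (g i) / m i) (V i)"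
      unfolding g_def V_def
      by (intro has_integral_divide integrable_integral integrable_weighted_real closed_voronoi_cell'
          voronoi_cell_subset continuous_intros)
    then have restricted:
      "((\<lambda>q. if q \<in> V i then g i q / m i else 0) has_integral integral (V i) (g i) / m i) Q"
      unfolding V_def by (rule iffD2[OF has_integral_restrict[OF voronoi_cell_subset]])
    have "h i q = (if q \<in> V i then g i q / m i else 0)"
      if "q \<in> Q - {q. \<exists>i l. P $ i \<noteq> P $ l \<and> norm (q - P $ i) = norm (q - P $ l)}" for q
    proof (cases "q \<in> V i")
      case True
      then have "{l. q \<in> V l} = {l. P $ l = P $ i}"
        unfolding V_def by (rule voronoi_cells_containing) (use that in auto)
      then show ?thesis unfolding h_def g_def m_def by simp
    qed (simp add: h_def)
    then show ?thesis
      by (rule has_integral_spike[OF negligible_voronoi_ties _ restricted])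
  qed
  have pointwise: "\<phi> q * (infdist q (sites X) ^ 2 - infdist q (sites P) ^ 2) \<le> (\<Sum>i\<in>UNIV. h i q)"
    if "q \<in> Q" for q
    unfolding h_def V_def sum_distrib_left[symmetric]
    using infdist_sites_sq_diff_le_cell_average[OF that] \<phi>_nonneg[OF that] by (rule mult_left_mono)
  have "energy X - energy P = integral Q (\<lambda>q. \<phi> q * (infdist q (sites X) ^ 2 - infdist q (sites P) ^ 2))"
    unfolding energy_def
    using integral_diff[OF integrable_energy_density[of X] integrable_energy_density[of P]]
    by (simp add: right_diff_distrib)
  also have "\<dots> \<le> integral Q (\<lambda>q. \<Sum>i\<in>UNIV. h i q)"
    using h_integral pointwise
    by (intro integral_le integrable_sum integrable_weighted_real compact_imp_closed[OF compact_Q]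
        continuous_intros) auto
  also have "\<dots> = (\<Sum>i\<in>UNIV. integral (V i) (g i) / m i)"
    using h_integral by (intro integral_unique has_integral_sum) auto
  finally show ?thesis unfolding V_def g_def m_def .
qed

lemma energy_diff_le:
  fixes P X :: "'a ^ 'n"
  assumes P: "P \<in> config_space Q"
  defines "C i \<equiv> centroid \<phi> (voronoi_cell Q P i)"
  shows "energy X - energy P \<le> (\<Sum>i\<in>UNIV. integral (voronoi_cell Q P i) \<phi> / card {l. P $ l = P $ i}
      * (norm (X $ i - C i) ^ 2 - norm (P $ i - C i) ^ 2))"
proof -
  have "integral (voronoi_cell Q P i) (\<lambda>q. \<phi> q * (norm (q - X $ i) ^ 2 - norm (q - P $ i) ^ 2))
      = integral (voronoi_cell Q P i) \<phi> * (norm (X $ i - C i) ^ 2 - norm (P $ i - C i) ^ 2)" for i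
  proof -
    have "integral (voronoi_cell Q P i) \<phi> \<noteq> 0"
      using mass_voronoi_cell_pos[OF P, of i] by simp
    then show ?thesis
      unfolding C_def
      by (rule integral_sqdist_diff_centroid[OF integrable_density_voronoi_cell
            integrable_weighted[OF closed_voronoi_cell' voronoi_cell_subset continuous_on_id]])
  qed
  then show ?thesis
    using energy_diff_le_cells[of X P] by simp
qed

lemma energy_less:
  fixes P X :: "'a ^ 'n"
  assumes P: "P \<in> config_space Q"
    and closer: "\<And>i. norm (X $ i - centroid \<phi> (voronoi_cell Q P i))
                    \<le> norm (P $ i - centroid \<phi> (voronoi_cell Q P i))"
    and strictly_closer: "norm (X $ j - centroid \<phi> (voronoi_cell Q P j))
                          < norm (P $ j - centroid \<phi> (voronoi_cell Q P j))"
  shows "energy X < energy P"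
proof -
  define t where "t i = integral (voronoi_cell Q P i) \<phi> / card {l. P $ l = P $ i}
      * (norm (X $ i - centroid \<phi> (voronoi_cell Q P i)) ^ 2
         - norm (P $ i - centroid \<phi> (voronoi_cell Q P i)) ^ 2)" for i
  have weight_pos: "0 < integral (voronoi_cell Q P i) \<phi> / card {l. P $ l = P $ i}" for i
    using mass_voronoi_cell_pos[OF P] by (intro divide_pos_pos) (auto simp: card_gt_0_iff)
  have t_nonpos: "t i \<le> 0" for i
    unfolding t_def using weight_pos[of i] closer[of i]
    by (intro mult_nonneg_nonpos) (auto intro: power_mono)
  moreover have "t j < 0"
    unfolding t_def using weight_pos[of j] strictly_closer
    by (intro mult_pos_neg) (auto intro: power_strict_mono)
  moreover have "(\<Sum>i\<in>UNIV - {j}. t i) \<le> 0"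
    using t_nonpos by (rule sum_nonpos)
  moreover have "(\<Sum>i\<in>UNIV. t i) = t j + (\<Sum>i\<in>UNIV - {j}. t i)"
    by (simp add: sum.remove)
  ultimately have "(\<Sum>i\<in>UNIV. t i) < 0" by linarith
  then show ?thesis using energy_diff_le[OF P, of X] unfolding t_def by simp
qed

lemma energy_lipschitz:
  "(2 * diameter Q * integral Q \<phi>)-lipschitz_on (config_space Q :: ('a ^ 'n) set) energy"
proof (rule lipschitz_onI)
  have "bounded Q" using compact_Q by (rule compact_imp_bounded)
  then show "0 \<le> 2 * diameter Q * integral Q \<phi>"
    using diameter_ge_0[OF \<open>bounded Q\<close>] integral_nonneg[OF integrable_\<phi> \<phi>_nonneg] by simp
  fix P P' :: "'a ^ 'n" assume P: "P \<in> config_space Q" and P': "P' \<in> config_space Q"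
  have bound: "infdist q (sites R) \<le> diameter Q" if "q \<in> Q" "R \<in> config_space Q" for q and R :: "'a ^ 'n"
  proof -
    obtain i where "infdist q (sites R) = norm (q - R $ i)"
      using infdist_sites_attained by blast
    then show ?thesis
      using diameter_bounded_bound[OF \<open>bounded Q\<close> that(1), of "R $ i"] that(2)
      by (simp add: config_space_def dist_norm)
  qed
  have "\<bar>\<phi> q * (infdist q (sites P) ^ 2 - infdist q (sites P') ^ 2)\<bar>
      \<le> \<phi> q * (2 * diameter Q * dist P P')" if q: "q \<in> Q" for q
    using infdist_sites_sq_diff_bound[OF bound[OF q P] bound[OF q P']] \<phi>_nonneg[OF q]
    by (simp add: abs_mult mult_left_mono)
  then have "norm (integral Q (\<lambda>q. \<phi> q * infdist q (sites P) ^ 2 - \<phi> q * infdist q (sites P') ^ 2))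
      \<le> integral Q (\<lambda>q. \<phi> q * (2 * diameter Q * dist P P'))"
    by (intro integral_norm_bound_integral integrable_diff integrable_energy_density
        integrable_on_mult_left integrable_\<phi>) (simp add: right_diff_distrib)
  then show "dist (energy P) (energy P') \<le> 2 * diameter Q * integral Q \<phi> * dist P P'"
    unfolding energy_def dist_real_def
    using integral_diff[OF integrable_energy_density[of P] integrable_energy_density[of P']]
    by (simp add: algebra_simps)
qed

lemma continuous_on_energy: "continuous_on (config_space Q :: ('a ^ 'n) set) energy"
  using energy_lipschitz by (rule lipschitz_on_continuous_on)

end

theorem proposition2:
  fixes Q :: "'a::euclidean_space set" and \<phi> :: "'a \<Rightarrow> real"
    and T :: "'a ^ 'n \<Rightarrow> 'a ^ 'n" and P0 :: "'a ^ 'n"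
  assumes Q: "polytope Q" "interior Q \<noteq> {}"
    and phi_int: "\<phi> integrable_on Q" and phi_pos: "\<forall>q\<in>Q. 0 < \<phi> q"
    and T_cont: "continuous_on (config_space Q) T"
    and T_maps: "T ` config_space Q \<subseteq> config_space Q"
    and a: "\<And>P i. P \<in> config_space Q \<Longrightarrow>
              norm (T P $ i - centroid \<phi> (voronoi_cell Q P i))
                \<le> norm (P $ i - centroid \<phi> (voronoi_cell Q P i))"
    and b: "\<And>P. P \<in> config_space Q \<Longrightarrow> \<not> centroidal_voronoi Q \<phi> P \<Longrightarrow>
              \<exists>j. norm (T P $ j - centroid \<phi> (voronoi_cell Q P j))
                   < norm (P $ j - centroid \<phi> (voronoi_cell Q P j))"
    and P0: "P0 \<in> config_space Q"
  shows "(\<lambda>m. infdist ((T ^^ Suc m) P0)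
              {P \<in> config_space Q. centroidal_voronoi Q \<phi> P}) \<longlonglongrightarrow> 0 \<and>
         (finite {P \<in> (config_space Q :: ('a ^ 'n) set). centroidal_voronoi Q \<phi> P} \<longrightarrow>
         (\<exists>C\<in>{P \<in> config_space Q. centroidal_voronoi Q \<phi> P}.
           (\<lambda>m. (T ^^ Suc m) P0) \<longlonglongrightarrow> C))"
proof -
  interpret voronoi_density Q \<phi>
    using Q phi_int phi_pos by unfold_locales (auto intro: polytope_imp_compact polytope_imp_convex)
  have fixed_iff: "centroidal_voronoi Q \<phi> P \<longleftrightarrow> T P = P" if P: "P \<in> config_space Q" for P
  proof
    assume centroidal: "centroidal_voronoi Q \<phi> P"
    have "T P $ i = P $ i" for i
    proof -
      have "P $ i = centroid \<phi> (voronoi_cell Q P i)"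
        using centroidal unfolding centroidal_voronoi_def by blast
      then have "norm (T P $ i - P $ i) \<le> 0" using a[OF P, of i] by simp
      then show ?thesis by simp
    qed
    then show "T P = P" by (simp add: vec_eq_iff)
  next
    assume "T P = P"
    then show "centroidal_voronoi Q \<phi> P" using b[OF P] by auto
  qed
  interpret strict_lyapunov "config_space Q" T energy
  proof
    show "energy (T P) < energy P" if "P \<in> config_space Q" "T P \<noteq> P" for P
      using b[OF that(1)] fixed_iff[OF that(1)] that(2) energy_less[OF that(1) a[OF that(1)]] by blast
  qed (use compact_config_space[OF compact_Q] T_maps T_cont continuous_on_energy in auto)
  have centroidal_eq: "{P \<in> config_space Q. centroidal_voronoi Q \<phi> P} = {P \<in> config_space Q. T P = P}"
    using fixed_iff by blast
  show ?thesis
    unfolding centroidal_eq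
    using LIMSEQ_Suc[OF infdist_orbit_fixed_points_tendsto_0[OF P0]] orbit_tendsto_fixed_point[OF P0]
      LIMSEQ_Suc by blast
qed

end
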